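(* Let $n$ be a nonnegative integer and let $a,b,c\in\mathbb{C}$ be such that all hypergeometric series and quotients below are defined (no lower parameter is zero or a negative integer). Then \[ {}_4F_3\!\left(\left.{-n,\frac{a}{2},\frac{a+1}{2},b \atop a,1+a-c,c}\right| 4\right) =\frac{(c-b)_n}{(c)_n}\, {}_4F_3\!\left(\left.{-n,1-c-n,b,1+b-c \atop 1+a-c,\frac{1+b-c-n}{2},\frac{2+b-c-n}{2}}\right| \frac{1}{4}\right). \]
   Context: For $a\in\mathbb{C}$, $(a)_0=1$ and $(a)_k=a(a+1)\cdots(a+k-1)$ for $k\ge1$. The hypergeometric series is ${}_rF_s\!\left(\left.{\alpha_1,\ldots,\alpha_r\atop \beta_1,\ldots,\beta_s}\right|z\right)=\sum_{k\ge0}\frac{(\alpha_1)_k\cdots(\alpha_r)_k}{k!(\beta_1)_k\cdots(\beta_s)_k}z^k$, with no lower parameter zero or a negative integer; when an upper parameter is $-n$ ($n$ a nonnegative integer) it is a finite sum over $0\le k\le n$. *)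

theory Defs
  imports Complex_Main "HOL-Library.Nonpos_Ints"
begin

definition hyp_term :: "complex list \<Rightarrow> complex list \<Rightarrow> complex \<Rightarrow> nat \<Rightarrow> complex" where
  "hyp_term as bs z k =
     (\<Prod>a\<leftarrow>as. pochhammer a k) / (fact k * (\<Prod>b\<leftarrow>bs. pochhammer b k)) * z ^ k"

definition hyp_term_series :: "nat \<Rightarrow> complex list \<Rightarrow> complex list \<Rightarrow> complex \<Rightarrow> complex" where
  "hyp_term_series n as bs z = (\<Sum>k\<le>n. hyp_term (- of_nat n # as) bs z k)"

end

(*
  Duplication, (a)_2k = 4^k (a/2)_k ((a+1)/2)_k, turns the k-th term on the left into
  (-n)_k (b)_k (a+k)_k / (k! (1+a-c)_k (c)_k), and Chu-Vandermonde at reflected arguments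
  expands (a+k)_k / ((1+a-c)_k (c)_k) as the sum over m of binom(k,m) / ((c)_(k-m) (1+a-c)_m).
  Exchanging the order of summation, the inner sum becomes a terminating 2F1 at 1, which
  Chu-Vandermonde evaluates to (c-b-m)_(n-m) / (c)_(n-m).  Reflection and duplication rewrite
  this ratio as (c-b)_n / (c)_n times the m-th term of the series on the right.
*)
theory Submission
  imports Defs "HOL-Computational_Algebra.Formal_Power_Series"
begin

lemma pochhammer_neq_0_if_notin_nonpos_Ints:
  "(z::'a::field_char_0) \<notin> \<int>\<^sub>\<le>\<^sub>0 \<Longrightarrow> pochhammer z k \<noteq> 0"
  by (auto simp: pochhammer_eq_0_iff)

lemma pochhammer_double_halves:
  fixes z :: "'a::field_char_0"
  shows "pochhammer z (2 * k) = 4 ^ k * pochhammer (z / 2) k * pochhammer ((z + 1) / 2) k"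
  using pochhammer_double[of "z / 2" k] by (simp add: power_mult add_divide_distrib)

text \<open>Chu--Vandermonde at the reflected arguments \<open>1 - c - k\<close> and \<open>1 - x - k\<close>.\<close>
lemma pochhammer_reflected_binomial_sum:
  fixes x c :: "'a::comm_ring_1"
  shows "pochhammer (x + c - 1 + of_nat k) k =
    (\<Sum>m\<le>k. of_nat (k choose m) * pochhammer (c + of_nat (k - m)) m * pochhammer (x + of_nat m) (k - m))"
proof -
  have reflect: "pochhammer (1 - z - of_nat k) j = (-1) ^ j * pochhammer (z + of_nat (k - j)) j"
    if "j \<le> k" for z :: 'a and j
    using pochhammer_minus[of "z + of_nat k - 1" j] that by (simp add: of_nat_diff algebra_simps)
  have "pochhammer (x + c - 1 + of_nat k) k = (-1) ^ k * pochhammer ((1 - c - of_nat k) + (1 - x - of_nat k)) k"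
    using pochhammer_minus[of "x + c + 2 * of_nat k - 2" k] by (simp add: algebra_simps)
  also have "\<dots> = (-1) ^ k *
      (\<Sum>m\<le>k. of_nat (k choose m) * pochhammer (1 - c - of_nat k) m * pochhammer (1 - x - of_nat k) (k - m))"
    by (simp only: pochhammer_binomial_sum)
  also have "\<dots> = (-1) ^ k * ((-1) ^ k *
      (\<Sum>m\<le>k. of_nat (k choose m) * pochhammer (c + of_nat (k - m)) m * pochhammer (x + of_nat m) (k - m)))"
    unfolding sum_distrib_left
  proof (intro arg_cong[where f = "(*) _"] sum.cong refl)
    fix m assume "m \<in> {..k}"
    then have "m \<le> k" by simp
    then have sign: "(-1::'a) ^ k = (-1) ^ m * (-1) ^ (k - m)" by (simp flip: power_add)
    have reflect_x: "pochhammer (1 - x - of_nat k) (k - m) = (-1) ^ (k - m) * pochhammer (x + of_nat m) (k - m)"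
      using reflect[of "k - m" x] \<open>m \<le> k\<close> by simp
    show "of_nat (k choose m) * pochhammer (1 - c - of_nat k) m * pochhammer (1 - x - of_nat k) (k - m) =
      (-1) ^ k * (of_nat (k choose m) * pochhammer (c + of_nat (k - m)) m * pochhammer (x + of_nat m) (k - m))"
      unfolding sign reflect[OF \<open>m \<le> k\<close>] reflect_x by (simp add: algebra_simps)
  qed
  finally show ?thesis by simp
qed

lemma pochhammer_quotient_binomial_sum:
  fixes x c :: "'a::field"
  assumes "pochhammer x k \<noteq> 0" and "pochhammer c k \<noteq> 0"
  shows "pochhammer (x + c - 1 + of_nat k) k / (pochhammer x k * pochhammer c k) =
    (\<Sum>m\<le>k. of_nat (k choose m) / (pochhammer c (k - m) * pochhammer x m))"
  unfolding pochhammer_reflected_binomial_sum sum_divide_distrib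
proof (intro sum.cong refl)
  fix m assume "m \<in> {..k}"
  then have "m \<le> k" by simp
  have "pochhammer c k = pochhammer c (k - m) * pochhammer (c + of_nat (k - m)) m"
    and "pochhammer x k = pochhammer x m * pochhammer (x + of_nat m) (k - m)"
    using pochhammer_product[of "k - m" k c] pochhammer_product[of m k x] \<open>m \<le> k\<close> by simp_all
  with assms show "of_nat (k choose m) * pochhammer (c + of_nat (k - m)) m * pochhammer (x + of_nat m) (k - m) /
      (pochhammer x k * pochhammer c k) = of_nat (k choose m) / (pochhammer c (k - m) * pochhammer x m)"
    by (simp add: field_simps)
qed

lemma hyp_term_halves_binomial_expansion:
  fixes a b c d :: complex
  assumes "a \<notin> \<int>\<^sub>\<le>\<^sub>0" and "1 + a - c \<notin> \<int>\<^sub>\<le>\<^sub>0" and "c \<notin> \<int>\<^sub>\<le>\<^sub>0"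
  shows "hyp_term [d, a / 2, (a + 1) / 2, b] [a, 1 + a - c, c] 4 k =
    pochhammer d k * pochhammer b k / fact k *
      (\<Sum>m\<le>k. of_nat (k choose m) / (pochhammer c (k - m) * pochhammer (1 + a - c) m))"
proof -
  have "pochhammer (a / 2) k * pochhammer ((a + 1) / 2) k * 4 ^ k = pochhammer a (k + k)"
    by (simp add: pochhammer_double_halves flip: mult_2)
  also have "\<dots> = pochhammer a k * pochhammer (a + of_nat k) k"
    by (rule pochhammer_product')
  finally have "hyp_term [d, a / 2, (a + 1) / 2, b] [a, 1 + a - c, c] 4 k =
      pochhammer d k * pochhammer b k / fact k *
      (pochhammer (a + of_nat k) k / (pochhammer (1 + a - c) k * pochhammer c k))"
    using pochhammer_neq_0_if_notin_nonpos_Ints[OF assms(1)] unfolding hyp_term_def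
    by (simp add: field_simps)
  also have "pochhammer (a + of_nat k) k / (pochhammer (1 + a - c) k * pochhammer c k) =
      (\<Sum>m\<le>k. of_nat (k choose m) / (pochhammer c (k - m) * pochhammer (1 + a - c) m))"
    using pochhammer_quotient_binomial_sum[of "1 + a - c" k c] assms
    by (simp add: pochhammer_neq_0_if_notin_nonpos_Ints)
  finally show ?thesis .
qed

lemma sum_atMost_triangle_swap:
  fixes n :: nat
  shows "(\<Sum>k\<le>n. \<Sum>i\<le>k. g i (k - i)) = (\<Sum>i\<le>n. \<Sum>j\<le>n - i. g i j)"
proof -
  have "(\<Sum>k\<le>n. \<Sum>i\<le>k. g i (k - i)) = (\<Sum>(i, j)\<in>{(i, j). i + j \<le> n}. g i j)"
    by (rule sum.triangle_reindex_eq[symmetric])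
  then show ?thesis by (simp add: pairs_le_eq_Sigma sum.Sigma)
qed

lemma Vandermonde_pochhammer_double_sum:
  fixes b c x :: "'a::field_char_0"
  assumes "c \<notin> \<int>\<^sub>\<le>\<^sub>0"
  shows "(\<Sum>k\<le>n. pochhammer (- of_nat n) k * pochhammer b k / fact k *
      (\<Sum>m\<le>k. of_nat (k choose m) / (pochhammer c (k - m) * pochhammer x m))) =
    (\<Sum>i\<le>n. pochhammer (- of_nat n) i * pochhammer b i / (fact i * pochhammer x i) *
      (pochhammer (c - b - of_nat i) (n - i) / pochhammer c (n - i)))"
proof -
  define f where "f i j = pochhammer (- of_nat n) (i + j) * pochhammer b (i + j) / fact (i + j) *
      (of_nat ((i + j) choose i) / (pochhammer c j * pochhammer x i))" for i j
  have "(\<Sum>k\<le>n. pochhammer (- of_nat n) k * pochhammer b k / fact k *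
      (\<Sum>m\<le>k. of_nat (k choose m) / (pochhammer c (k - m) * pochhammer x m))) =
      (\<Sum>k\<le>n. \<Sum>i\<le>k. f i (k - i))"
    unfolding f_def sum_distrib_left by (intro sum.cong refl) simp
  also have "\<dots> = (\<Sum>i\<le>n. \<Sum>j\<le>n - i. f i j)"
    by (rule sum_atMost_triangle_swap)
  also have "\<dots> = (\<Sum>i\<le>n. pochhammer (- of_nat n) i * pochhammer b i / (fact i * pochhammer x i) *
      (\<Sum>j\<le>n - i. pochhammer (b + of_nat i) j * pochhammer (- of_nat (n - i)) j / (fact j * pochhammer c j)))"
    unfolding sum_distrib_left
  proof (intro sum.cong refl)
    fix i j assume "i \<in> {..n}"
    then have "- of_nat n + of_nat i = (- of_nat (n - i) :: 'a)" by (simp add: of_nat_diff)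
    then have "pochhammer (- of_nat n) (i + j) = pochhammer (- of_nat n) i * pochhammer (- of_nat (n - i) :: 'a) j"
      by (simp only: pochhammer_product')
    moreover have binomial: "(of_nat ((i + j) choose i) :: 'a) = fact (i + j) / (fact i * fact j)"
      by (simp add: binomial_fact)
    ultimately show "f i j = pochhammer (- of_nat n) i * pochhammer b i / (fact i * pochhammer x i) *
        (pochhammer (b + of_nat i) j * pochhammer (- of_nat (n - i)) j / (fact j * pochhammer c j))"
      unfolding f_def pochhammer_product'[of b] binomial by (simp add: field_simps)
  qed
  also have "\<dots> = (\<Sum>i\<le>n. pochhammer (- of_nat n) i * pochhammer b i / (fact i * pochhammer x i) *
      (pochhammer (c - b - of_nat i) (n - i) / pochhammer c (n - i)))"
  proof (intro sum.cong refl arg_cong[where f = "(*) _"])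
    fix i
    have "\<forall>j \<in> {0..<n - i}. c \<noteq> - of_nat j" using assms by auto
    from Vandermonde_pochhammer[OF this, of "b + of_nat i"]
    show "(\<Sum>j\<le>n - i. pochhammer (b + of_nat i) j * pochhammer (- of_nat (n - i)) j / (fact j * pochhammer c j)) =
        pochhammer (c - b - of_nat i) (n - i) / pochhammer c (n - i)"
      by (simp add: atLeast0AtMost diff_diff_eq)
  qed
  finally show ?thesis .
qed

text \<open>After reflecting \<open>(1 + b - c - n)_2m\<close>, \<open>(1 + b - c)_m\<close> and \<open>(1 - c - n)_m\<close>, both sides
  become \<open>(c - b - m)_(m+n) (c)_(n-m) (c + n - m)_m\<close>.\<close>
lemma pochhammer_shift_identity:
  fixes b c :: "'a::comm_ring_1"
  assumes "m \<le> n"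
  shows "pochhammer (c - b - of_nat m) (n - m) * pochhammer c n * pochhammer (1 + b - c - of_nat n) (2 * m) =
    pochhammer (c - b) n * pochhammer c (n - m) * pochhammer (1 - c - of_nat n) m * pochhammer (1 + b - c) m"
proof -
  have "pochhammer (1 + b - c - of_nat n) (2 * m) = pochhammer (c - b - of_nat m + of_nat (n - m)) (2 * m)"
    using pochhammer_minus[of "c - b + of_nat n - 1" "2 * m"] \<open>m \<le> n\<close>
    by (simp add: of_nat_diff algebra_simps power_mult power2_eq_square)
  then have "pochhammer (c - b - of_nat m) (n - m) * pochhammer (1 + b - c - of_nat n) (2 * m) =
      pochhammer (c - b - of_nat m) (n - m + 2 * m)"
    by (simp add: pochhammer_product')
  also have "\<dots> = pochhammer (c - b - of_nat m) m * pochhammer (c - b) n"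
    using pochhammer_product'[of "c - b - of_nat m" m n] \<open>m \<le> n\<close> by simp
  finally have low: "pochhammer (c - b - of_nat m) (n - m) * pochhammer (1 + b - c - of_nat n) (2 * m) =
      pochhammer (c - b - of_nat m) m * pochhammer (c - b) n" .
  have "pochhammer c n = pochhammer c (n - m) * pochhammer (c + of_nat (n - m)) m"
    using pochhammer_product[of "n - m" n c] \<open>m \<le> n\<close> by simp
  moreover have "pochhammer (1 - c - of_nat n) m = (-1) ^ m * pochhammer (c + of_nat (n - m)) m"
    using pochhammer_minus[of "c + of_nat n - 1" m] \<open>m \<le> n\<close> by (simp add: of_nat_diff algebra_simps)
  moreover have "pochhammer (1 + b - c) m = (-1) ^ m * pochhammer (c - b - of_nat m) m"
    using pochhammer_minus[of "c - b - 1" m] by (simp add: algebra_simps)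
  ultimately show ?thesis
    using low by (simp add: algebra_simps)
qed

lemma Vandermonde_ratio_eq_hyp_term_quarter:
  fixes b c x :: complex
  assumes "m \<le> n" and "c \<notin> \<int>\<^sub>\<le>\<^sub>0"
    and "(1 + b - c - of_nat n) / 2 \<notin> \<int>\<^sub>\<le>\<^sub>0" and "(2 + b - c - of_nat n) / 2 \<notin> \<int>\<^sub>\<le>\<^sub>0"
  shows "pochhammer (- of_nat n) m * pochhammer b m / (fact m * pochhammer x m) *
      (pochhammer (c - b - of_nat m) (n - m) / pochhammer c (n - m)) =
    pochhammer (c - b) n / pochhammer c n *
      hyp_term [- of_nat n, 1 - c - of_nat n, b, 1 + b - c]
        [x, (1 + b - c - of_nat n) / 2, (2 + b - c - of_nat n) / 2] (1 / 4) m"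
proof -
  have "(1 + b - c - of_nat n + 1) / 2 = (2 + b - c - of_nat n) / 2" by simp
  then have double: "pochhammer (1 + b - c - of_nat n) (2 * m) =
      4 ^ m * pochhammer ((1 + b - c - of_nat n) / 2) m * pochhammer ((2 + b - c - of_nat n) / 2) m"
    by (metis pochhammer_double_halves)
  have "pochhammer (c - b - of_nat m) (n - m) / pochhammer c (n - m) =
      pochhammer (c - b) n / pochhammer c n *
      (pochhammer (1 - c - of_nat n) m * pochhammer (1 + b - c) m / pochhammer (1 + b - c - of_nat n) (2 * m))"
    using pochhammer_shift_identity[OF assms(1), of c b] assms(2-4) unfolding double
    by (simp add: field_simps pochhammer_neq_0_if_notin_nonpos_Ints)
  then show ?thesis
    unfolding hyp_term_def double by (simp add: field_simps)
qed

theorem proposition3p2: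
  fixes n :: nat and a b c :: complex
  assumes "a \<notin> \<int>\<^sub>\<le>\<^sub>0" and "1 + a - c \<notin> \<int>\<^sub>\<le>\<^sub>0" and "c \<notin> \<int>\<^sub>\<le>\<^sub>0"
    and "(1 + b - c - of_nat n) / 2 \<notin> \<int>\<^sub>\<le>\<^sub>0"
    and "(2 + b - c - of_nat n) / 2 \<notin> \<int>\<^sub>\<le>\<^sub>0"
  shows "hyp_term_series n [a / 2, (a + 1) / 2, b] [a, 1 + a - c, c] 4 =
    pochhammer (c - b) n / pochhammer c n *
    hyp_term_series n [1 - c - of_nat n, b, 1 + b - c]
      [1 + a - c, (1 + b - c - of_nat n) / 2, (2 + b - c - of_nat n) / 2] (1 / 4)"
proof -
  have "hyp_term_series n [a / 2, (a + 1) / 2, b] [a, 1 + a - c, c] 4 =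
      (\<Sum>k\<le>n. pochhammer (- of_nat n) k * pochhammer b k / fact k *
        (\<Sum>m\<le>k. of_nat (k choose m) / (pochhammer c (k - m) * pochhammer (1 + a - c) m)))"
    unfolding hyp_term_series_def using assms(1-3) by (simp add: hyp_term_halves_binomial_expansion)
  also have "\<dots> = (\<Sum>m\<le>n. pochhammer (- of_nat n) m * pochhammer b m / (fact m * pochhammer (1 + a - c) m) *
      (pochhammer (c - b - of_nat m) (n - m) / pochhammer c (n - m)))"
    using assms(3) by (rule Vandermonde_pochhammer_double_sum)
  also have "\<dots> = pochhammer (c - b) n / pochhammer c n *
    hyp_term_series n [1 - c - of_nat n, b, 1 + b - c]
      [1 + a - c, (1 + b - c - of_nat n) / 2, (2 + b - c - of_nat n) / 2] (1 / 4)"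
    unfolding hyp_term_series_def sum_distrib_left using assms(3-5)
    by (intro sum.cong refl Vandermonde_ratio_eq_hyp_term_quarter) simp_all
  finally show ?thesis .
qed

end
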